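(* Let $n\ge 2$. Let $\hat a_{i,i-1}>0$ and $\hat b_{i,i-1}\in\mathbb{R}$ for $2\le i\le n$; for $1\le m\le k\le n$ put $\hat a_{k,m}:=\prod_{i=m+1}^{k}\hat a_{i,i-1}$ (so $\hat a_{k,k}=1$), and put $\hat b_{n,1}:=\sum_{k=2}^{n}\hat a_{n,k}\hat b_{k,k-1}$. Let $L_i\in\mathbb{R}$ ($2\le i\le n$) and $R_i\in\mathbb{R}$ ($1\le i\le n-1$) satisfy $L_i=\hat a_{i,i-1}R_{i-1}+\hat b_{i,i-1}$ for $2\le i\le n$ and $L_i\le R_i$ for $2\le i\le n-1$. Define $i^*$: if $\min_{2\le k\le n}\hat a_{k,1}\le1$, let $i^*\in\{2,\ldots,n\}$ be an index attaining $\min_{2\le k\le n}\hat a_{k,1}$; otherwise $i^*=1$. Suppose $i^*\ge 2$. Then $$\sum_{j=2}^{n}\bigl(L_j-R_{j-1}\bigr)\le(\hat a_{i^*,1}-1)R_1+\frac{\hat a_{n,i^*}-1}{\hat a_{n,i^*}}\,L_n+\frac{\hat b_{n,1}}{\hat a_{n,i^*}}.$$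
   Context: Setting: a timing packet traverses a chain of nodes $1,\ldots,n$; $L_i=\tau^{i,l}(t_{i,l})$ is the receive time-stamp and $R_i=\tau^{i,r}(t_{i,r})$ the send time-stamp of node $i$, produced by arbitrary "left"/"right" clocks. $\hat a_{i,i-1},\hat b_{i,i-1}$ are declared relative skews/offsets of adjacent nodes, $\hat a_{k,m}$ the skew product, and $\hat b_{n,1}$ the offset of the composition of the declared affine relations along the chain. The equation $L_i=\hat a_{i,i-1}R_{i-1}+\hat b_{i,i-1}$ is the skew-consistency condition and $L_i\le R_i$ is causality. *)

theory Defs
  imports Main "HOL-Analysis.Analysis"
begin

text \<open>a i stands for the declared relative skew of node i w.r.t. node i-1 (2 \<le> i \<le> n).
  skew_prod a k m = product over i = m+1..k of a i (empty product 1 when k = m).\<close>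
definition skew_prod :: "(nat \<Rightarrow> real) \<Rightarrow> nat \<Rightarrow> nat \<Rightarrow> real" where
  "skew_prod a k m = (\<Prod>i\<in>{m+1..k}. a i)"

text \<open>Offset of the composed affine relation along the chain 1..n.\<close>
definition chain_offset :: "(nat \<Rightarrow> real) \<Rightarrow> (nat \<Rightarrow> real) \<Rightarrow> nat \<Rightarrow> real" where
  "chain_offset a b n = (\<Sum>k=2..n. skew_prod a n k * b k)"

end

theory Submission
  imports Defs
begin

text \<open>Write \<open>A j = skew_prod a j 1\<close> and \<open>d j = R j - L j \<ge> 0\<close> for the residence time at node \<open>j\<close>.
  Unwinding the skew-consistency relations along the chain and dividing by \<open>A n\<close> gives
  \<open>L n / A n = R 1 + \<Sum>j. b j / A j + \<Sum>j<n. d j / A j\<close>, while the left-hand side telescopes to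
  \<open>L n - R 1 - \<Sum>j. d j\<close>. After this substitution the claimed right-hand side becomes
  \<open>L n - R 1 - A i\<^sup>* \<cdot> \<Sum>j. d j / A j\<close>, and the inequality reduces to
  \<open>A i\<^sup>* \<cdot> d j / A j \<le> d j\<close>, which holds because \<open>A i\<^sup>*\<close> is the least of the \<open>A j\<close>.\<close>

lemma skew_prod_split:
  assumes "m \<le> k" "k \<le> n"
  shows "skew_prod a n m = skew_prod a k m * skew_prod a n k"
proof -
  have "{m+1..n} = {m+1..k} \<union> {k+1..n}" "{m+1..k} \<inter> {k+1..n} = {}"
    using assms by auto
  then show ?thesis
    unfolding skew_prod_def by (simp add: prod.union_disjoint[symmetric])
qed

lemma skew_prod_Suc:
  assumes "m \<le> k"
  shows "skew_prod a (Suc k) m = skew_prod a k m * a (Suc k)"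
  unfolding skew_prod_def using assms by simp

lemma skew_prod_pos:
  assumes "\<And>i. m < i \<Longrightarrow> i \<le> k \<Longrightarrow> a i > 0"
  shows "skew_prod a k m > 0"
  unfolding skew_prod_def using assms by (intro prod_pos) auto

lemma skew_prod_eq_divide:
  assumes pos: "\<And>i. m < i \<Longrightarrow> i \<le> n \<Longrightarrow> a i > 0" and "m \<le> k" "k \<le> n"
  shows "skew_prod a n k = skew_prod a n m / skew_prod a k m"
proof -
  have "skew_prod a k m > 0" using pos \<open>k \<le> n\<close> by (intro skew_prod_pos) auto
  then show ?thesis using skew_prod_split[OF \<open>m \<le> k\<close> \<open>k \<le> n\<close>, of a] by simp
qed

lemma chain_offset_eq:
  assumes pos: "\<And>i. 2 \<le> i \<Longrightarrow> i \<le> n \<Longrightarrow> a i > 0"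
  shows "chain_offset a b n = skew_prod a n 1 * (\<Sum>j=2..n. b j / skew_prod a j 1)"
  unfolding chain_offset_def sum_distrib_left
proof (rule sum.cong)
  fix j assume "j \<in> {2..n}"
  then show "skew_prod a n j * b j = skew_prod a n 1 * (b j / skew_prod a j 1)"
    using skew_prod_eq_divide[of 1 n a j] pos by simp
qed simp

lemma sum_atLeastAtMost_last:
  assumes "m < k"
  shows "sum f {Suc m..k} = sum f {Suc m..k - 1} + f k"
  using assms by (cases k) auto

lemma sum_hop_telescope:
  fixes L R :: "nat \<Rightarrow> real"
  assumes "m < n"
  shows "(\<Sum>j=Suc m..n. L j - R (j - 1)) = L n - R m - (\<Sum>j=Suc m..n-1. R j - L j)"
  using Suc_leI[OF assms]
proof (induction rule: dec_induct)
  case (step n)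
  then show ?case using sum_atLeastAtMost_last[of m n "\<lambda>j. R j - L j"] by simp
qed simp

lemma skew_chain_normalized:
  fixes a b L R :: "nat \<Rightarrow> real"
  assumes pos: "\<And>i. m < i \<Longrightarrow> i \<le> n \<Longrightarrow> a i > 0"
    and skew: "\<And>i. m < i \<Longrightarrow> i \<le> n \<Longrightarrow> L i = a i * R (i - 1) + b i"
    and "m < n"
  shows "L n / skew_prod a n m = R m + (\<Sum>j=Suc m..n. b j / skew_prod a j m)
           + (\<Sum>j=Suc m..n-1. (R j - L j) / skew_prod a j m)"
  using Suc_leI[OF \<open>m < n\<close>]
proof (induction rule: dec_induct)
  case base
  then show ?case using skew[of "Suc m"] pos[of "Suc m"] \<open>m < n\<close>
    by (simp add: skew_prod_def field_simps)
next
  case (step k)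
  let ?A = "\<lambda>j. skew_prod a j m"
  have Ak: "?A k > 0" using pos step.hyps by (intro skew_prod_pos) auto
  have ak: "a (Suc k) > 0" using pos step.hyps by simp
  have "L (Suc k) / ?A (Suc k) = R k / ?A k + b (Suc k) / ?A (Suc k)"
    using skew[of "Suc k"] skew_prod_Suc[of m k a] step.hyps Ak ak by (simp add: field_simps)
  also have "R k / ?A k = L k / ?A k + (R k - L k) / ?A k"
    by (simp add: diff_divide_distrib)
  finally show ?case
    using step.IH step.hyps sum_atLeastAtMost_last[of m k "\<lambda>j. (R j - L j) / ?A j"] by simp
qed

lemma mult_sum_divide_le_sum:
  fixes c :: real
  assumes "\<And>j. j \<in> S \<Longrightarrow> 0 < c \<and> c \<le> w j" "\<And>j. j \<in> S \<Longrightarrow> 0 \<le> x j"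
  shows "c * (\<Sum>j\<in>S. x j / w j) \<le> (\<Sum>j\<in>S. x j)"
  unfolding sum_distrib_left
proof (rule sum_mono)
  fix j assume "j \<in> S"
  then have "0 < c" "c \<le> w j" "0 \<le> x j" using assms by auto
  then have "c / w j * x j \<le> x j" by (intro mult_left_le_one_le) auto
  then show "c * (x j / w j) \<le> x j" by (simp add: field_simps)
qed

text \<open>The hypothesis \<open>minle1\<close> only records that the case \<open>i\<^sup>* \<ge> 2\<close> of the paper's definition of \<open>i\<^sup>*\<close>
  applies; the bound itself uses nothing but the minimality of \<open>i\<^sup>*\<close>.\<close>

theorem lemma4:
  fixes n :: nat and a b L R :: "nat \<Rightarrow> real" and istar :: nat
  assumes n2: "n \<ge> 2"
    and apos: "\<And>i. 2 \<le> i \<Longrightarrow> i \<le> n \<Longrightarrow> a i > 0"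
    and skew: "\<And>i. 2 \<le> i \<Longrightarrow> i \<le> n \<Longrightarrow> L i = a i * R (i - 1) + b i"
    and causal: "\<And>i. 2 \<le> i \<Longrightarrow> i \<le> n - 1 \<Longrightarrow> L i \<le> R i"
    and minle1: "(MIN k\<in>{2..n}. skew_prod a k 1) \<le> 1"
    and istar_range: "istar \<in> {2..n}"
    and istar_min: "skew_prod a istar 1 = (MIN k\<in>{2..n}. skew_prod a k 1)"
  shows "(\<Sum>j=2..n. L j - R (j - 1))
     \<le> (skew_prod a istar 1 - 1) * R 1
        + (skew_prod a n istar - 1) / skew_prod a n istar * L n
        + chain_offset a b n / skew_prod a n istar"
proof -
  let ?A = "\<lambda>j. skew_prod a j 1"
  define Sb where "Sb = (\<Sum>j=2..n. b j / ?A j)"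
  define Sd where "Sd = (\<Sum>j=2..n-1. (R j - L j) / ?A j)"
  have pos: "\<And>j. j \<le> n \<Longrightarrow> ?A j > 0" using apos by (intro skew_prod_pos) auto
  have Ln: "L n = ?A n * (R 1 + Sb + Sd)"
    using skew_chain_normalized[of 1 n a L R b] apos skew n2 pos[of n]
    unfolding Sb_def Sd_def by (simp add: numeral_2_eq_2 field_simps)
  have telescope: "(\<Sum>j=2..n. L j - R (j - 1)) = L n - R 1 - (\<Sum>j=2..n-1. R j - L j)"
    using sum_hop_telescope[of 1 n L R] n2 by (simp add: numeral_2_eq_2)
  have "?A istar * Sd \<le> (\<Sum>j=2..n-1. R j - L j)"
    unfolding Sd_def using istar_range istar_min pos causal
    by (intro mult_sum_divide_le_sum) auto
  moreover have "(?A istar - 1) * R 1 + (skew_prod a n istar - 1) / skew_prod a n istar * L n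
      + chain_offset a b n / skew_prod a n istar = L n - R 1 - ?A istar * Sd"
  proof -
    have "?A n > 0" "?A istar > 0" using pos istar_range by auto
    moreover have tail: "skew_prod a n istar = ?A n / ?A istar"
      using skew_prod_eq_divide[of 1 n a istar] istar_range apos by simp
    moreover have offset: "chain_offset a b n = ?A n * Sb"
      using chain_offset_eq[OF apos] unfolding Sb_def .
    ultimately show ?thesis unfolding tail offset Ln by (simp add: field_simps)
  qed
  ultimately show ?thesis using telescope by simp
qed

end
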